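(* Let $G$ be a finite group, $\pi$ a unitary representation of $G$ on an infinite dimensional Hilbert space, and $(H,\pi)$ a $\kappa$-saturated, $\kappa$-strongly homogeneous model of $IHS_\pi$ ($\kappa$ uncountable inaccessible). Let $\vec a=(a_1,\dots,a_n)\in H^n$ and let $B,C\subset H$ be small. Then $\vec a$ is $\ast$-independent from $B$ over $C$ if and only if $\Pr_{\overline{B\cup C}}(a_j)=\Pr_{\overline{C}}(a_j)$ for each $1\le j\le n$.
   Context: Hilbert spaces are metric structures in continuous logic in the language $\mathcal{L}=\{0,-,\dot 2,\frac{x+y}{2}, e^{i\theta}:\theta\in 2\pi\mathbb{Q}\}$; $\mathcal{L}_\pi=\mathcal{L}\cup\{\pi(g):g\in G\}$; $IHS_\pi$ is the complete $\mathcal{L}_\pi$-theory of the given representation. "Small" means of cardinality $<\kappa$. $\overline{A}$ denotes the algebraic closure in $\mathcal{L}_\pi$ and $\Pr_D$ the orthogonal projection onto a closed subspace $D$. $W_1,\dots,W_k$ are the irreducible unitary representations of $G$ up to isomorphism and $P_i$ is the orthogonal projection onto the isotypic component of $W_i$. $\vec a$ is $\ast$-independent from $B$ over $C$ if $\Pr_{\overline{B\cup C}}(P_i(a_j))=\Pr_{\overline{C}}(P_i(a_j))$ for all $1\le j\le n$, $1\le i\le k$. *)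

theory Defs
  imports "HOL-Analysis.Analysis" "HOL-Algebra.Group"
begin

text \<open>A complex Hilbert space is modelled as a real Hilbert space (type class
real_inner + complete_space) together with a complex structure J (multiplication
by the imaginary unit). The real inner product is the real part of the complex one.\<close>

definition cplx_structure :: "('a::real_inner \<Rightarrow> 'a) \<Rightarrow> bool" where
  "cplx_structure J \<longleftrightarrow> linear J \<and> (\<forall>x. J (J x) = - x) \<and>
     (\<forall>x y. inner (J x) (J y) = inner x y)"

definition clinear :: "('a::real_inner \<Rightarrow> 'a) \<Rightarrow> ('a \<Rightarrow> 'a) \<Rightarrow> bool" where
  "clinear J T \<longleftrightarrow> linear T \<and> (\<forall>x. T (J x) = J (T x))"

definition unitary_rep :: "('g, 'b) monoid_scheme \<Rightarrow> ('a::real_inner \<Rightarrow> 'a) \<Rightarrow> ('g \<Rightarrow> 'a \<Rightarrow> 'a) \<Rightarrow> bool" where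
  "unitary_rep G J \<pi> \<longleftrightarrow>
     (\<forall>g\<in>carrier G. clinear J (\<pi> g) \<and> bij (\<pi> g) \<and>
        (\<forall>x y. inner (\<pi> g x) (\<pi> g y) = inner x y)) \<and>
     (\<forall>g\<in>carrier G. \<forall>h\<in>carrier G. \<pi> (g \<otimes>\<^bsub>G\<^esub> h) = \<pi> g \<circ> \<pi> h) \<and>
     \<pi> \<one>\<^bsub>G\<^esub> = id"

definition csubspace :: "('a::real_inner \<Rightarrow> 'a) \<Rightarrow> 'a set \<Rightarrow> bool" where
  "csubspace J V \<longleftrightarrow> subspace V \<and> closed V \<and> J ` V \<subseteq> V"

definition orth_proj :: "'a::real_inner set \<Rightarrow> 'a \<Rightarrow> 'a" where
  "orth_proj D x = (THE y. y \<in> D \<and> (\<forall>z\<in>D. inner (x - y) z = 0))"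

text \<open>Algebraic closure in the language L_pi of Hilbert spaces with the G-action:
the closed complex linear span of the G-orbit of A.\<close>
definition acl_pi :: "('g, 'b) monoid_scheme \<Rightarrow> ('a::real_inner \<Rightarrow> 'a) \<Rightarrow> ('g \<Rightarrow> 'a \<Rightarrow> 'a) \<Rightarrow> 'a set \<Rightarrow> 'a set" where
  "acl_pi G J \<pi> A = closure (span (\<Union>g\<in>carrier G. \<pi> g ` A \<union> J ` \<pi> g ` A))"

definition inv_subspace :: "('g, 'b) monoid_scheme \<Rightarrow> ('a::real_inner \<Rightarrow> 'a) \<Rightarrow> ('g \<Rightarrow> 'a \<Rightarrow> 'a) \<Rightarrow> 'a set \<Rightarrow> bool" where
  "inv_subspace G J \<pi> V \<longleftrightarrow> csubspace J V \<and> (\<forall>g\<in>carrier G. \<pi> g ` V \<subseteq> V)"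

definition irreducible_subrep :: "('g, 'b) monoid_scheme \<Rightarrow> ('a::real_inner \<Rightarrow> 'a) \<Rightarrow> ('g \<Rightarrow> 'a \<Rightarrow> 'a) \<Rightarrow> 'a set \<Rightarrow> bool" where
  "irreducible_subrep G J \<pi> V \<longleftrightarrow> inv_subspace G J \<pi> V \<and> V \<noteq> {0} \<and>
     (\<forall>W. inv_subspace G J \<pi> W \<and> W \<subseteq> V \<longrightarrow> W = {0} \<or> W = V)"

definition subrep_iso :: "('g, 'b) monoid_scheme \<Rightarrow> ('a::real_inner \<Rightarrow> 'a) \<Rightarrow> ('g \<Rightarrow> 'a \<Rightarrow> 'a) \<Rightarrow> 'a set \<Rightarrow> 'a set \<Rightarrow> bool" where
  "subrep_iso G J \<pi> U V \<longleftrightarrow> (\<exists>T. clinear J T \<and> bij_betw T U V \<and>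
     (\<forall>g\<in>carrier G. \<forall>x\<in>U. T (\<pi> g x) = \<pi> g (T x)))"

definition isotypic :: "('g, 'b) monoid_scheme \<Rightarrow> ('a::real_inner \<Rightarrow> 'a) \<Rightarrow> ('g \<Rightarrow> 'a \<Rightarrow> 'a) \<Rightarrow> 'a set \<Rightarrow> 'a set" where
  "isotypic G J \<pi> U = closure (span (\<Union>{V. inv_subspace G J \<pi> V \<and> subrep_iso G J \<pi> U V}))"

text \<open>Star-independence of (a_1,...,a_n) from B over C. The isotypic projections P_i
range over all irreducible types occurring in H (for types not occurring, P_i = 0 and the
condition is trivial).\<close>
definition star_indep :: "('g, 'b) monoid_scheme \<Rightarrow> ('a::real_inner \<Rightarrow> 'a) \<Rightarrow> ('g \<Rightarrow> 'a \<Rightarrow> 'a)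
    \<Rightarrow> (nat \<Rightarrow> 'a) \<Rightarrow> nat \<Rightarrow> 'a set \<Rightarrow> 'a set \<Rightarrow> bool" where
  "star_indep G J \<pi> a n B C \<longleftrightarrow>
     (\<forall>j\<in>{1..n}. \<forall>U. irreducible_subrep G J \<pi> U \<longrightarrow>
        orth_proj (acl_pi G J \<pi> (B \<union> C)) (orth_proj (isotypic G J \<pi> U) (a j)) =
        orth_proj (acl_pi G J \<pi> C) (orth_proj (isotypic G J \<pi> U) (a j)))"

end

theory Submission
  imports Defs
begin

text \<open>
  Let \<open>D\<close> be a closed subspace invariant under \<open>G\<close> and \<open>J\<close>, and \<open>P\<^sub>D\<close> its projection.
  Then \<open>P\<^sub>D\<close> is an intertwiner, so by Schur's lemma it maps a copy of an irreducible \<open>U\<close>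
  either to \<open>0\<close> or onto another copy of \<open>U\<close>. Hence \<open>P\<^sub>D\<close> preserves the isotypic
  component of \<open>U\<close> and commutes with its projection \<open>P\<^sub>U\<close>, which gives
  \<open>P\<^sub>D (P\<^sub>U a) - P\<^sub>E (P\<^sub>U a) = P\<^sub>U (P\<^sub>D a - P\<^sub>E a)\<close> for invariant \<open>D\<close>, \<open>E\<close>.
  A vector \<open>x \<noteq> 0\<close> is never orthogonal to all isotypic components: \<open>acl {x}\<close> is
  finite-dimensional, so it contains an irreducible \<open>U\<close>, and if \<open>x\<close> were orthogonal to the
  isotypic component of \<open>U\<close>, then so would be the invariant subspace \<open>acl {x} \<supseteq> U\<close>.
  Applying this to \<open>P\<^sub>D a - P\<^sub>E a\<close> with \<open>D = acl (B \<union> C)\<close>, \<open>E = acl C\<close> proves the theorem.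
\<close>

section \<open>Orthogonal projections in Hilbert spaces\<close>

lemma subspace_closure:
  fixes S :: "'a::real_normed_vector set"
  assumes "subspace S"
  shows "subspace (closure S)"
proof -
  have image_closure: "f ` closure S \<subseteq> closure S" if "continuous_on UNIV f" "f ` S \<subseteq> S" for f
    using that closure_subset by (intro image_closure_subset) (auto intro: continuous_on_subset)
  have add_closure: "x + y \<in> closure S" if "x \<in> closure S" "y \<in> closure S" for x y
  proof -
    have "(\<lambda>x. x + s) ` closure S \<subseteq> closure S" if "s \<in> S" for s
      using that assms by (intro image_closure) (auto simp: continuous_on_add subspace_add)
    then have "(\<lambda>s. s + y) ` S \<subseteq> closure S"
      using \<open>y \<in> closure S\<close> by (auto simp: add.commute)
    then have "(\<lambda>s. s + y) ` closure S \<subseteq> closure S"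
      by (intro image_closure_subset) (auto simp: continuous_on_add)
    then show ?thesis using \<open>x \<in> closure S\<close> by blast
  qed
  have "(\<lambda>x. c *\<^sub>R x) ` closure S \<subseteq> closure S" for c
    using assms by (intro image_closure) (auto simp: continuous_on_scaleR subspace_scale)
  then show ?thesis
    using assms add_closure closure_subset unfolding subspace_def by blast
qed

lemma bounded_linear_image_closure_span:
  fixes L :: "'a::real_normed_vector \<Rightarrow> 'a"
  assumes "bounded_linear L" "L ` X \<subseteq> span X"
  shows "L ` closure (span X) \<subseteq> closure (span X)"
proof -
  have "L ` span X = span (L ` X)"
    using assms(1) by (simp add: bounded_linear.linear linear_span_image)
  also have "\<dots> \<subseteq> span X" using assms(2) by (simp add: span_minimal)
  finally have "L ` span X \<subseteq> closure (span X)" using closure_subset by blast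
  then show ?thesis
    using image_closure_subset[OF linear_continuous_on[OF assms(1)]] by blast
qed

lemma parallelogram_law:
  fixes a b :: "'a::real_inner"
  shows "(norm (a + b))\<^sup>2 + (norm (a - b))\<^sup>2 = 2 * (norm a)\<^sup>2 + 2 * (norm b)\<^sup>2"
  by (simp add: power2_norm_eq_inner inner_add_left inner_add_right inner_diff_left
      inner_diff_right inner_commute)

lemma subspace_minimizing_sequence_Cauchy:
  fixes V :: "'a::real_inner set"
  assumes "subspace V" "\<And>n. v n \<in> V" "(\<lambda>n. dist x (v n)) \<longlonglongrightarrow> infdist x V"
  shows "Cauchy v"
proof (rule metric_CauchyI)
  define d where "d = infdist x V"
  fix e :: real assume "e > 0"
  have "(\<lambda>n. (dist x (v n))\<^sup>2) \<longlonglongrightarrow> d\<^sup>2" unfolding d_def by (intro tendsto_intros assms(3))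
  moreover have "d\<^sup>2 < d\<^sup>2 + e\<^sup>2 / 4" using \<open>e > 0\<close> by simp
  ultimately have "eventually (\<lambda>n. (dist x (v n))\<^sup>2 < d\<^sup>2 + e\<^sup>2 / 4) sequentially"
    by (rule order_tendstoD(2))
  then obtain N where N: "\<And>n. n \<ge> N \<Longrightarrow> (dist x (v n))\<^sup>2 < d\<^sup>2 + e\<^sup>2 / 4"
    unfolding eventually_sequentially by blast
  have "dist (v m) (v n) < e" if "m \<ge> N" "n \<ge> N" for m n
  proof -
    have "midpoint (v m) (v n) \<in> V"
      using assms(1,2) by (simp add: midpoint_def subspace_add subspace_scale)
    then have "d\<^sup>2 \<le> (norm (x - midpoint (v m) (v n)))\<^sup>2"
      using infdist_le[of _ V x] infdist_nonneg[of x V] by (simp add: d_def dist_norm power_mono)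
    moreover have "(x - v m) + (x - v n) = 2 *\<^sub>R (x - midpoint (v m) (v n))"
      by (simp add: midpoint_def algebra_simps scaleR_2)
    then have "(norm ((x - v m) + (x - v n)))\<^sup>2 = 4 * (norm (x - midpoint (v m) (v n)))\<^sup>2"
      by (simp add: power2_eq_square)
    moreover have "(norm ((x - v m) + (x - v n)))\<^sup>2 + (norm (v n - v m))\<^sup>2
        = 2 * (norm (x - v m))\<^sup>2 + 2 * (norm (x - v n))\<^sup>2"
      using parallelogram_law[of "x - v m" "x - v n"] by simp
    ultimately have "(dist (v m) (v n))\<^sup>2 < e\<^sup>2"
      using N[OF \<open>m \<ge> N\<close>] N[OF \<open>n \<ge> N\<close>] by (simp add: dist_norm norm_minus_commute)
    then show ?thesis using \<open>e > 0\<close> by (simp add: power_less_imp_less_base)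
  qed
  then show "\<exists>N. \<forall>m\<ge>N. \<forall>n\<ge>N. dist (v m) (v n) < e" by blast
qed

lemma closed_subspace_nearest_point:
  fixes V :: "'a::{real_inner,complete_space} set"
  assumes "subspace V" "closed V"
  obtains y where "y \<in> V" "\<And>w. w \<in> V \<Longrightarrow> dist x y \<le> dist x w"
proof -
  define d where "d = infdist x V"
  have "V \<noteq> {}" using assms(1) subspace_0 by blast
  have "\<exists>v\<in>V. dist x v < d + inverse (real (Suc n))" for n
  proof -
    have "Inf (dist x ` V) < d + inverse (real (Suc n))"
      by (simp add: d_def infdist_notempty[OF \<open>V \<noteq> {}\<close>])
    then show ?thesis
      using \<open>V \<noteq> {}\<close> by (subst (asm) cInf_less_iff) (auto intro: bdd_belowI2[of _ 0])
  qed
  then obtain v where v: "\<And>n. v n \<in> V" "\<And>n. dist x (v n) < d + inverse (real (Suc n))"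
    by metis
  have "d \<le> dist x (v n)" "dist x (v n) \<le> d + inverse (real (Suc n))" for n
    using v by (auto simp: d_def infdist_le less_imp_le)
  then have lim: "(\<lambda>n. dist x (v n)) \<longlonglongrightarrow> d"
    by (intro tendsto_sandwich[OF _ _ tendsto_const LIMSEQ_inverse_real_of_nat_add])
      (simp_all add: always_eventually)
  then have "Cauchy v"
    using assms(1) v(1) by (intro subspace_minimizing_sequence_Cauchy) (simp_all add: d_def)
  then obtain y where y: "v \<longlonglongrightarrow> y" using convergent_eq_Cauchy by blast
  have "y \<in> V" using closed_sequentially[OF assms(2) v(1) y] .
  moreover have "dist x y = d" using LIMSEQ_unique[OF tendsto_dist[OF tendsto_const y] lim] .
  ultimately show ?thesis using that infdist_le by (metis d_def)
qed

lemma nearest_point_orthogonal: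
  fixes V :: "'a::real_inner set"
  assumes "subspace V" "y \<in> V" and nearest: "\<And>w. w \<in> V \<Longrightarrow> dist x y \<le> dist x w" and "z \<in> V"
  shows "inner (x - y) z = 0"
proof (cases "z = 0")
  case False
  define c where "c = inner (x - y) z"
  define t where "t = c / (norm z)\<^sup>2"
  have "y + t *\<^sub>R z \<in> V" using assms by (simp add: subspace_add subspace_scale)
  then have "norm (x - y) \<le> norm ((x - y) - t *\<^sub>R z)"
    using nearest by (simp add: dist_norm diff_diff_eq)
  then have "(norm (x - y))\<^sup>2 \<le> (norm ((x - y) - t *\<^sub>R z))\<^sup>2"
    by (simp add: power_mono)
  also have "\<dots> = (norm (x - y))\<^sup>2 - 2 * t * c + t\<^sup>2 * (norm z)\<^sup>2"
    unfolding power2_norm_eq_inner c_def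
    by (simp add: inner_diff_left inner_diff_right inner_commute power2_eq_square algebra_simps)
  also have "\<dots> = (norm (x - y))\<^sup>2 - c\<^sup>2 / (norm z)\<^sup>2"
    using False by (simp add: t_def field_simps power2_eq_square)
  finally have "c\<^sup>2 \<le> 0" using False by (simp add: divide_le_0_iff)
  then show ?thesis by (simp add: c_def)
qed simp

lemma orthogonal_decomposition_unique:
  fixes V :: "'a::real_inner set"
  assumes "subspace V" "y \<in> V" "y' \<in> V"
    and "\<forall>z\<in>V. inner (x - y) z = 0" "\<forall>z\<in>V. inner (x - y') z = 0"
  shows "y = y'"
proof -
  have "y - y' \<in> V" using assms(1-3) by (rule subspace_diff)
  then have "inner (y - y') (y - y') = inner (x - y') (y - y') - inner (x - y) (y - y')"
    and "inner (x - y') (y - y') = 0" "inner (x - y) (y - y') = 0"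
    using assms(4,5) by (auto simp: inner_diff_left)
  then show ?thesis by simp
qed

lemma orth_proj:
  fixes V :: "'a::{real_inner,complete_space} set"
  assumes "subspace V" "closed V"
  shows "orth_proj V x \<in> V" "\<And>z. z \<in> V \<Longrightarrow> inner (x - orth_proj V x) z = 0"
proof -
  obtain y where y: "y \<in> V" "\<And>w. w \<in> V \<Longrightarrow> dist x y \<le> dist x w"
    using closed_subspace_nearest_point[OF assms, where x = x] by blast
  then have "y \<in> V \<and> (\<forall>z\<in>V. inner (x - y) z = 0)"
    using nearest_point_orthogonal[OF assms(1) y] by blast
  moreover have "y' = y" if "y' \<in> V \<and> (\<forall>z\<in>V. inner (x - y') z = 0)" for y'
    using that \<open>y \<in> V \<and> _\<close> by (intro orthogonal_decomposition_unique[OF assms(1)]) auto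
  ultimately have "orth_proj V x \<in> V \<and> (\<forall>z\<in>V. inner (x - orth_proj V x) z = 0)"
    unfolding orth_proj_def by (rule theI)
  then show "orth_proj V x \<in> V" "\<And>z. z \<in> V \<Longrightarrow> inner (x - orth_proj V x) z = 0"
    by auto
qed

lemma orth_proj_eqI:
  fixes V :: "'a::{real_inner,complete_space} set"
  assumes "subspace V" "closed V" "y \<in> V" "\<And>z. z \<in> V \<Longrightarrow> inner (x - y) z = 0"
  shows "orth_proj V x = y"
  using orth_proj(2)[OF assms(1,2)] assms(4)
  by (intro orthogonal_decomposition_unique[OF assms(1) orth_proj(1)[OF assms(1,2)] assms(3)]) auto

lemma orth_proj_linear:
  fixes V :: "'a::{real_inner,complete_space} set"
  assumes "subspace V" "closed V"
  shows "linear (orth_proj V)"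
proof
  fix x y :: 'a and r :: real
  show "orth_proj V (x + y) = orth_proj V x + orth_proj V y"
  proof (rule orth_proj_eqI[OF assms])
    show "orth_proj V x + orth_proj V y \<in> V"
      using orth_proj(1)[OF assms] by (simp add: subspace_add[OF assms(1)])
    fix z assume "z \<in> V"
    then show "inner (x + y - (orth_proj V x + orth_proj V y)) z = 0"
      using orth_proj(2)[OF assms \<open>z \<in> V\<close>, where x = x] orth_proj(2)[OF assms \<open>z \<in> V\<close>, where x = y]
      by (simp add: inner_diff_left inner_add_left)
  qed
  show "orth_proj V (r *\<^sub>R x) = r *\<^sub>R orth_proj V x"
  proof (rule orth_proj_eqI[OF assms])
    show "r *\<^sub>R orth_proj V x \<in> V"
      using orth_proj(1)[OF assms] by (simp add: subspace_scale[OF assms(1)])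
    fix z assume "z \<in> V"
    then show "inner (r *\<^sub>R x - r *\<^sub>R orth_proj V x) z = 0"
      using orth_proj(2)[OF assms \<open>z \<in> V\<close>, where x = x]
      by (simp add: scaleR_diff_right[symmetric] del: scaleR_diff_right)
  qed
qed

lemma orth_proj_self_adjoint:
  fixes V :: "'a::{real_inner,complete_space} set"
  assumes "subspace V" "closed V"
  shows "inner (orth_proj V x) y = inner x (orth_proj V y)"
proof -
  have "inner (y - orth_proj V y) (orth_proj V x) = 0" "inner (x - orth_proj V x) (orth_proj V y) = 0"
    using orth_proj[OF assms] by blast+
  then have "inner (orth_proj V x) y = inner (orth_proj V y) (orth_proj V x)"
    and "inner (orth_proj V y) (orth_proj V x) = inner x (orth_proj V y)"
    using inner_commute[of "orth_proj V x" y] inner_commute[of "orth_proj V y" "orth_proj V x"]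
    by (simp_all add: inner_diff_left)
  then show ?thesis by simp
qed

lemma orth_proj_bounded_linear:
  fixes V :: "'a::{real_inner,complete_space} set"
  assumes "subspace V" "closed V"
  shows "bounded_linear (orth_proj V)"
proof (rule bounded_linear_intro[where K = 1])
  fix x
  have "orthogonal (orth_proj V x) (x - orth_proj V x)"
    using orth_proj[OF assms] by (simp add: orthogonal_def inner_commute)
  then have "(norm x)\<^sup>2 = (norm (orth_proj V x))\<^sup>2 + (norm (x - orth_proj V x))\<^sup>2"
    using norm_add_Pythagorean by fastforce
  then have "(norm (orth_proj V x))\<^sup>2 \<le> (norm x)\<^sup>2" by simp
  then show "norm (orth_proj V x) \<le> norm x * 1"
    using power2_le_imp_le by simp
qed (simp_all add: linear_add linear_scale orth_proj_linear[OF assms])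

lemma orth_proj_commute:
  fixes D Q :: "'a::{real_inner,complete_space} set"
  assumes "subspace D" "closed D" "subspace Q" "closed Q" and "orth_proj D ` Q \<subseteq> Q"
  shows "orth_proj Q (orth_proj D x) = orth_proj D (orth_proj Q x)"
proof (rule orth_proj_eqI[OF assms(3,4)])
  show "orth_proj D (orth_proj Q x) \<in> Q" using assms(5) orth_proj(1)[OF assms(3,4)] by blast
  fix q assume "q \<in> Q"
  then have "orth_proj D q \<in> Q" using assms(5) by blast
  have "orth_proj D x - orth_proj D (orth_proj Q x) = orth_proj D (x - orth_proj Q x)"
    by (simp add: linear_diff[OF orth_proj_linear[OF assms(1,2)]])
  then have "inner (orth_proj D x - orth_proj D (orth_proj Q x)) q
      = inner (x - orth_proj Q x) (orth_proj D q)"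
    by (simp add: orth_proj_self_adjoint[OF assms(1,2)])
  also have "\<dots> = 0" using orth_proj(2)[OF assms(3,4) \<open>orth_proj D q \<in> Q\<close>] .
  finally show "inner (orth_proj D x - orth_proj D (orth_proj Q x)) q = 0" .
qed

section \<open>Finite-dimensional subspaces\<close>

lemma closed_span_insert:
  fixes S :: "'a::{real_inner,complete_space} set"
  assumes "closed (span S)"
  shows "closed (span (insert x S))"
proof (cases "x \<in> span S")
  case True
  then show ?thesis using assms by (simp add: span_redundant)
next
  case False
  let ?P = "orth_proj (span S)"
  have S: "subspace (span S)" "closed (span S)" using assms by simp_all
  define d where "d = x - ?P x"
  have d_orth: "inner z d = 0" if "z \<in> span S" for z
    using orth_proj(2)[OF S that, of x] by (simp add: d_def inner_commute)
  have "inner x d = inner d d"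
    using d_orth[OF orth_proj(1)[OF S]] by (simp add: d_def inner_diff_left)
  moreover have "d \<noteq> 0" using False orth_proj(1)[OF S, of x] by (auto simp: d_def)
  ultimately have "inner x d \<noteq> 0" by simp
  \<comment> \<open>The coefficient of \<open>x\<close> is read off by the continuous functional \<open>\<lambda>y. inner y d / inner x d\<close>.\<close>
  have coeff: "y - (inner y d / inner x d) *\<^sub>R x \<in> span S" if y: "y \<in> span (insert x S)" for y
  proof -
    obtain k where k: "y - k *\<^sub>R x \<in> span S" using y unfolding span_insert by blast
    then have "inner y d = k * inner x d" using d_orth[OF k] by (simp add: inner_diff_left)
    then show ?thesis using k \<open>inner x d \<noteq> 0\<close> by simp
  qed
  show ?thesis unfolding closed_sequential_limits
  proof (intro allI impI)
    fix f l assume fl: "(\<forall>n. f n \<in> span (insert x S)) \<and> f \<longlonglongrightarrow> l"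
    then have "\<And>n. f n - (inner (f n) d / inner x d) *\<^sub>R x \<in> span S"
      using coeff by blast
    moreover have "(\<lambda>n. f n - (inner (f n) d / inner x d) *\<^sub>R x) \<longlonglongrightarrow> l - (inner l d / inner x d) *\<^sub>R x"
      using fl \<open>inner x d \<noteq> 0\<close> by (intro tendsto_intros) auto
    ultimately have "l - (inner l d / inner x d) *\<^sub>R x \<in> span S"
      by (rule closed_sequentially[OF S(2)])
    then show "l \<in> span (insert x S)" unfolding span_insert by blast
  qed
qed

lemma closed_span_finite:
  fixes S :: "'a::{real_inner,complete_space} set"
  assumes "finite S"
  shows "closed (span S)"
  using assms by (induction S rule: finite_induct) (simp_all add: closed_span_insert)

lemma closed_subspace_finite_span:
  fixes V :: "'a::{real_inner,complete_space} set"
  assumes "subspace V" "V \<subseteq> span S" "finite S"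
  shows "closed V"
proof -
  obtain B where B: "B \<subseteq> V" "independent B" "V \<subseteq> span B"
    using maximal_independent_subset by blast
  have "B \<subseteq> span S" using B(1) assms(2) by (rule subset_trans)
  then have "finite B" using independent_span_bound[OF assms(3) B(2)] by simp
  moreover have "span B \<subseteq> V" using B(1) assms(1) by (rule span_minimal)
  then have "V = span B" using B(3) by (rule subset_antisym[rotated])
  ultimately show ?thesis by (simp add: closed_span_finite)
qed

lemma dim_psubset_finite_span:
  fixes U W :: "'a::real_vector set"
  assumes "subspace W" "W \<subset> U" "U \<subseteq> span S" "finite S"
  shows "dim W < dim U"
proof -
  obtain B where B: "B \<subseteq> W" "independent B" "W \<subseteq> span B"
    using maximal_independent_subset by blast
  obtain BU where BU: "BU \<subseteq> U" "independent BU" "U \<subseteq> span BU"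
    using maximal_independent_subset by blast
  have "BU \<subseteq> span S" using BU(1) assms(3) by (rule subset_trans)
  then have "finite BU" using independent_span_bound[OF assms(4) BU(2)] by simp
  obtain u where u: "u \<in> U" "u \<notin> W" using assms(2) by blast
  moreover have "span B \<subseteq> W" using B(1) assms(1) by (rule span_minimal)
  ultimately have "u \<notin> span B" by blast
  then have "independent (insert u B)" and "u \<notin> B"
    using independent_insertI[OF _ B(2)] span_base by auto
  moreover have "insert u B \<subseteq> span BU" using u(1) B(1) assms(2) BU(3) by blast
  ultimately have "finite (insert u B) \<and> card (insert u B) \<le> card BU"
    by (intro independent_span_bound[OF \<open>finite BU\<close>])
  then have "Suc (card B) \<le> card BU" using \<open>u \<notin> B\<close> by (elim conjE) simp
  then show ?thesis
    using basis_card_eq_dim[OF B(1,3,2)] basis_card_eq_dim[OF BU(1,3,2)] by simp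
qed

section \<open>Unitary representations of finite groups\<close>

locale finite_unitary_rep =
  fixes G :: "('g, 'b) monoid_scheme"
    and J :: "'a::{real_inner, complete_space} \<Rightarrow> 'a"
    and \<pi> :: "'g \<Rightarrow> 'a \<Rightarrow> 'a"
  assumes is_group: "group G" and finite_carrier: "finite (carrier G)"
    and cplx: "cplx_structure J" and unitary: "unitary_rep G J \<pi>"
begin

sublocale group G by (rule is_group)

abbreviation invariant :: "'a set \<Rightarrow> bool" where "invariant \<equiv> inv_subspace G J \<pi>"
abbreviation irred :: "'a set \<Rightarrow> bool" where "irred \<equiv> irreducible_subrep G J \<pi>"
abbreviation rep_iso :: "'a set \<Rightarrow> 'a set \<Rightarrow> bool" where "rep_iso \<equiv> subrep_iso G J \<pi>"
abbreviation isotyp :: "'a set \<Rightarrow> 'a set" where "isotyp \<equiv> isotypic G J \<pi>"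
abbreviation acl :: "'a set \<Rightarrow> 'a set" where "acl \<equiv> acl_pi G J \<pi>"

lemma J_linear: "linear J"
  and J_J [simp]: "J (J x) = - x"
  and inner_J_J: "inner (J x) (J y) = inner x y"
  using cplx by (auto simp: cplx_structure_def)

lemma inner_J_left: "inner (J x) y = - inner x (J y)"
  using inner_J_J[of x "J y"] by simp

lemma bounded_linear_J: "bounded_linear J"
proof (rule bounded_linear_intro[where K = 1])
  show "norm (J x) \<le> norm x * 1" for x using inner_J_J[of x x] by (simp add: norm_eq_sqrt_inner)
qed (simp_all add: linear_add[OF J_linear] linear_scale[OF J_linear])

lemma pi_mult: "g \<in> carrier G \<Longrightarrow> h \<in> carrier G \<Longrightarrow> \<pi> (g \<otimes>\<^bsub>G\<^esub> h) x = \<pi> g (\<pi> h x)"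
  and pi_one: "\<pi> \<one>\<^bsub>G\<^esub> x = x"
  using unitary by (auto simp: unitary_rep_def)

context
  fixes g assumes g: "g \<in> carrier G"
begin

lemma pi_linear: "linear (\<pi> g)"
  and pi_J: "\<pi> g (J x) = J (\<pi> g x)"
  and inner_pi_pi: "inner (\<pi> g x) (\<pi> g y) = inner x y"
  using unitary g by (auto simp: unitary_rep_def clinear_def)

lemma pi_inv_pi: "\<pi> g (\<pi> (inv\<^bsub>G\<^esub> g) x) = x"
  using pi_mult[OF g inv_closed[OF g], of x] g by (simp add: pi_one)

lemma inner_pi_left: "inner (\<pi> g x) y = inner x (\<pi> (inv\<^bsub>G\<^esub> g) y)"
  using inner_pi_pi[of x "\<pi> (inv\<^bsub>G\<^esub> g) y"] by (simp add: pi_inv_pi)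

lemma bounded_linear_pi: "bounded_linear (\<pi> g)"
proof (rule bounded_linear_intro[where K = 1])
  show "norm (\<pi> g x) \<le> norm x * 1" for x
    using inner_pi_pi[of x x] by (simp add: norm_eq_sqrt_inner)
qed (simp_all add: linear_add[OF pi_linear] linear_scale[OF pi_linear])

end

lemma invariant_iff:
  "invariant V \<longleftrightarrow> subspace V \<and> closed V \<and> J ` V \<subseteq> V \<and> (\<forall>g\<in>carrier G. \<pi> g ` V \<subseteq> V)"
  unfolding inv_subspace_def csubspace_def by blast

lemma invariantD:
  assumes "invariant V"
  shows "subspace V" "closed V" "J ` V \<subseteq> V" "g \<in> carrier G \<Longrightarrow> \<pi> g ` V \<subseteq> V"
  using assms by (simp_all add: invariant_iff)

lemma irredD:
  assumes "irred U"
  shows "invariant U" "U \<noteq> {0}" "invariant W \<Longrightarrow> W \<subseteq> U \<Longrightarrow> W = {0} \<or> W = U"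
  using assms by (auto simp: irreducible_subrep_def)

lemma invariant_closure_span:
  assumes "\<And>g x. g \<in> carrier G \<Longrightarrow> x \<in> X \<Longrightarrow> \<pi> g x \<in> span X"
    and "\<And>x. x \<in> X \<Longrightarrow> J x \<in> span X"
  shows "invariant (closure (span X))"
  unfolding invariant_iff
proof (intro conjI ballI)
  show "J ` closure (span X) \<subseteq> closure (span X)"
    using assms(2) by (intro bounded_linear_image_closure_span[OF bounded_linear_J]) blast
  show "\<pi> g ` closure (span X) \<subseteq> closure (span X)" if "g \<in> carrier G" for g
    using assms(1) that by (intro bounded_linear_image_closure_span[OF bounded_linear_pi]) blast+
qed (simp_all add: subspace_closure)

lemma invariant_finite_span:
  assumes "subspace V" "J ` V \<subseteq> V" "\<And>g. g \<in> carrier G \<Longrightarrow> \<pi> g ` V \<subseteq> V"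
    and "V \<subseteq> span S" "finite S"
  shows "invariant V"
  unfolding invariant_iff using assms closed_subspace_finite_span by blast

lemma invariant_orthogonal_comp:
  assumes "invariant V"
  shows "invariant (orthogonal_comp V)"
  unfolding invariant_iff
proof (intro conjI ballI subsetI)
  show "subspace (orthogonal_comp V)" by (rule subspace_orthogonal_comp)
  have "orthogonal_comp V = (\<Inter>v\<in>V. {x. inner v x = 0})"
    by (auto simp: orthogonal_comp_def orthogonal_def)
  then show "closed (orthogonal_comp V)" by (simp add: closed_INT closed_hyperplane)
  fix y assume "y \<in> J ` orthogonal_comp V"
  then obtain x where x: "x \<in> orthogonal_comp V" "y = J x" by blast
  have "inner v (J x) = 0" if "v \<in> V" for v
  proof -
    have "J v \<in> V" using invariantD(3)[OF assms] that by blast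
    then show ?thesis
      using x(1) inner_J_left[of v x] by (auto simp: orthogonal_comp_def orthogonal_def)
  qed
  then show "y \<in> orthogonal_comp V" by (simp add: x(2) orthogonal_comp_def orthogonal_def)
next
  fix g y assume g: "g \<in> carrier G" and "y \<in> \<pi> g ` orthogonal_comp V"
  then obtain x where x: "x \<in> orthogonal_comp V" "y = \<pi> g x" by blast
  have "inner v (\<pi> g x) = 0" if "v \<in> V" for v
  proof -
    have "\<pi> (inv\<^bsub>G\<^esub> g) v \<in> V" using invariantD(4)[OF assms inv_closed[OF g]] that by blast
    then have "inner (\<pi> (inv\<^bsub>G\<^esub> g) v) x = 0"
      using x(1) by (auto simp: orthogonal_comp_def orthogonal_def)
    then show ?thesis
      using inner_pi_left[OF g, of x v] by (simp add: inner_commute)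
  qed
  then show "y \<in> orthogonal_comp V" by (simp add: x(2) orthogonal_comp_def orthogonal_def)
qed

lemma orth_proj_pi:
  assumes "invariant D" "g \<in> carrier G"
  shows "orth_proj D (\<pi> g x) = \<pi> g (orth_proj D x)"
proof (rule orth_proj_eqI[OF invariantD(1,2)[OF assms(1)]])
  note D = invariantD[OF assms(1)]
  show "\<pi> g (orth_proj D x) \<in> D" using D(4)[OF assms(2)] orth_proj(1)[OF D(1,2)] by blast
  fix z assume "z \<in> D"
  then have "\<pi> (inv\<^bsub>G\<^esub> g) z \<in> D" using D(4)[OF inv_closed[OF assms(2)]] by blast
  then have "inner (x - orth_proj D x) (\<pi> (inv\<^bsub>G\<^esub> g) z) = 0" by (rule orth_proj(2)[OF D(1,2)])
  then show "inner (\<pi> g x - \<pi> g (orth_proj D x)) z = 0"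
    using inner_pi_left[OF assms(2)] by (simp add: linear_diff[OF pi_linear[OF assms(2)], symmetric])
qed

lemma orth_proj_J:
  assumes "invariant D"
  shows "orth_proj D (J x) = J (orth_proj D x)"
proof (rule orth_proj_eqI[OF invariantD(1,2)[OF assms]])
  note D = invariantD[OF assms]
  show "J (orth_proj D x) \<in> D" using D(3) orth_proj(1)[OF D(1,2)] by blast
  fix z assume "z \<in> D"
  then have "inner (x - orth_proj D x) (J z) = 0" using D(3) orth_proj(2)[OF D(1,2)] by blast
  then show "inner (J x - J (orth_proj D x)) z = 0"
    using inner_J_left by (simp add: linear_diff[OF J_linear, symmetric])
qed

lemma invariant_acl: "invariant (acl A)"
proof -
  let ?X = "\<Union>g\<in>carrier G. \<pi> g ` A \<union> J ` \<pi> g ` A"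
  have "\<pi> g x \<in> span ?X" if g: "g \<in> carrier G" and "x \<in> ?X" for g x
  proof -
    obtain h a where h: "h \<in> carrier G" "a \<in> A" "x = \<pi> h a \<or> x = J (\<pi> h a)"
      using \<open>x \<in> ?X\<close> by blast
    then have "\<pi> g x = \<pi> (g \<otimes>\<^bsub>G\<^esub> h) a \<or> \<pi> g x = J (\<pi> (g \<otimes>\<^bsub>G\<^esub> h) a)"
      using g by (auto simp: pi_mult pi_J)
    then show ?thesis using m_closed[OF g h(1)] h(2) by (blast intro: span_base)
  qed
  moreover have "J x \<in> span ?X" if "x \<in> ?X" for x
  proof -
    obtain h a where h: "h \<in> carrier G" "a \<in> A" "x = \<pi> h a \<or> x = J (\<pi> h a)"
      using \<open>x \<in> ?X\<close> by blast
    from h(3) show ?thesis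
    proof
      assume "x = \<pi> h a"
      then have "J x \<in> ?X" using h by blast
      then show ?thesis by (rule span_base)
    next
      assume "x = J (\<pi> h a)"
      moreover have "\<pi> h a \<in> ?X" using h by blast
      ultimately show ?thesis by (simp add: span_neg span_base)
    qed
  qed
  ultimately show ?thesis unfolding acl_pi_def by (rule invariant_closure_span)
qed

lemma subset_acl: "A \<subseteq> acl A"
proof
  fix a assume "a \<in> A"
  then have "a \<in> \<pi> \<one>\<^bsub>G\<^esub> ` A" by (rule image_eqI[where f = "\<pi> \<one>\<^bsub>G\<^esub>", OF pi_one[symmetric]])
  then have "a \<in> (\<Union>g\<in>carrier G. \<pi> g ` A \<union> J ` \<pi> g ` A)" by (intro UN_I[OF one_closed] UnI1)
  then show "a \<in> acl A" unfolding acl_pi_def by (rule subsetD[OF closure_subset span_base])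
qed

lemma acl_minimal:
  assumes "invariant V" "A \<subseteq> V"
  shows "acl A \<subseteq> V"
proof -
  have "(\<Union>g\<in>carrier G. \<pi> g ` A \<union> J ` \<pi> g ` A) \<subseteq> V"
    using assms invariantD(3,4)[OF assms(1)] by blast
  then show ?thesis
    unfolding acl_pi_def using invariantD(1,2)[OF assms(1)] by (intro closure_minimal span_minimal)
qed

lemma acl_finite_span:
  assumes "finite A"
  obtains S where "finite S" "acl A = span S"
proof
  let ?X = "\<Union>g\<in>carrier G. \<pi> g ` A \<union> J ` \<pi> g ` A"
  show "finite ?X" using finite_carrier assms by auto
  then show "acl A = span ?X" by (simp add: acl_pi_def closed_span_finite)
qed

lemma exists_irred_subset:
  assumes "invariant W" "W \<noteq> {0}" "W \<subseteq> span S" "finite S"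
  obtains U where "irred U" "U \<subseteq> W"
proof -
  define P where "P U \<longleftrightarrow> invariant U \<and> U \<subseteq> W \<and> U \<noteq> {0}" for U
  have "P W" using assms by (simp add: P_def)
  then obtain U where U: "P U" and U_min: "\<And>Y. P Y \<Longrightarrow> dim U \<le> dim Y"
    using ex_has_least_nat[of P W dim] by blast
  have "Y = {0} \<or> Y = U" if "invariant Y" "Y \<subseteq> U" for Y
  proof (rule ccontr)
    assume "\<not> (Y = {0} \<or> Y = U)"
    then have "P Y" and "Y \<subset> U" using that U by (auto simp: P_def)
    moreover have "U \<subseteq> span S" using U assms(3) by (auto simp: P_def)
    ultimately have "dim Y < dim U"
      using invariantD(1)[OF that(1)] assms(4) by (intro dim_psubset_finite_span)
    then show False using U_min[OF \<open>P Y\<close>] by simp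
  qed
  then have "irred U" using U by (auto simp: irreducible_subrep_def P_def)
  then show ?thesis using U that by (simp add: P_def)
qed

lemma irred_finite_span:
  assumes "irred U"
  obtains S where "finite S" "U = span S"
proof -
  note U = irredD[OF assms]
  obtain u where "u \<in> U" "u \<noteq> 0" using U(2) subspace_0[OF invariantD(1)[OF U(1)]] by blast
  then have "acl {u} \<subseteq> U" "acl {u} \<noteq> {0}"
    using acl_minimal[OF U(1)] subset_acl[of "{u}"] by auto
  then have "acl {u} = U" using U(3)[OF invariant_acl] by blast
  moreover obtain S where "finite S" "acl {u} = span S" by (rule acl_finite_span[of "{u}"]) simp
  ultimately show ?thesis using that by simp
qed

definition intertwines :: "'a set \<Rightarrow> ('a \<Rightarrow> 'a) \<Rightarrow> bool" where
  "intertwines U T \<longleftrightarrow> clinear J T \<and> (\<forall>g\<in>carrier G. \<forall>x\<in>U. T (\<pi> g x) = \<pi> g (T x))"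

lemma intertwinesD:
  assumes "intertwines U L"
  shows "linear L" "L (J x) = J (L x)" "g \<in> carrier G \<Longrightarrow> x \<in> U \<Longrightarrow> L (\<pi> g x) = \<pi> g (L x)"
  using assms by (auto simp: intertwines_def clinear_def)

lemma rep_iso_iff_intertwines_bij: "rep_iso U V \<longleftrightarrow> (\<exists>T. intertwines U T \<and> bij_betw T U V)"
  by (auto simp: subrep_iso_def intertwines_def)

lemma rep_iso_refl: "rep_iso U U"
  unfolding rep_iso_iff_intertwines_bij intertwines_def clinear_def
  by (intro exI[of _ id]) (simp add: linear_id)

lemma intertwines_orth_proj_comp:
  assumes "invariant D" "intertwines U T"
  shows "intertwines U (orth_proj D \<circ> T)"
  using assms orth_proj_linear[OF invariantD(1,2)[OF assms(1)]]
  by (auto simp: intertwines_def clinear_def linear_compose orth_proj_J orth_proj_pi)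

lemma irred_intertwines_zero_or_inj:
  assumes "irred U" "intertwines U L"
  shows "(\<forall>u\<in>U. L u = 0) \<or> inj_on L U"
proof -
  note U = irredD[OF assms(1)] and L = intertwinesD[OF assms(2)]
  note U' = invariantD[OF U(1)]
  obtain S where S: "finite S" "U = span S" using irred_finite_span[OF assms(1)] .
  define K where "K = U \<inter> {x. L x = 0}"
  have "invariant K"
  proof (rule invariant_finite_span[OF _ _ _ _ S(1)])
    show "subspace K" unfolding K_def by (intro subspace_inter U'(1) linear_subspace_kernel L(1))
    show "J ` K \<subseteq> K" using U'(3) by (auto simp: K_def L(2) linear_0[OF J_linear])
    show "\<pi> g ` K \<subseteq> K" if "g \<in> carrier G" for g
      using U'(4)[OF that] that by (auto simp: K_def L(3) linear_0[OF pi_linear])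
    show "K \<subseteq> span S" using S(2) by (auto simp: K_def)
  qed
  then have "K = {0} \<or> K = U" using U(3) by (auto simp: K_def)
  then show ?thesis
  proof
    assume "K = {0}"
    then show ?thesis using linear_inj_on_iff_eq_0[OF L(1) U'(1)] by (auto simp: K_def)
  qed (auto simp: K_def)
qed

lemma invariant_intertwines_image:
  assumes "irred U" "intertwines U L"
  shows "invariant (L ` U)"
proof -
  note U = invariantD[OF irredD(1)[OF assms(1)]] and L = intertwinesD[OF assms(2)]
  obtain S where S: "finite S" "U = span S" using irred_finite_span[OF assms(1)] .
  show ?thesis
  proof (rule invariant_finite_span)
    show "subspace (L ` U)" using L(1) U(1) by (rule linear_subspace_image)
    show "J ` L ` U \<subseteq> L ` U" using U(3) by (auto simp flip: L(2))
    show "\<pi> g ` L ` U \<subseteq> L ` U" if "g \<in> carrier G" for g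
      using U(4)[OF that] that by (force simp flip: L(3))
    show "L ` U \<subseteq> span (L ` S)" using S(2) by (simp add: linear_span_image[OF L(1)])
  qed (use S(1) in simp)
qed

subsection \<open>Isotypic components\<close>

lemma rep_iso_subset_isotyp:
  assumes "invariant V" "rep_iso U V"
  shows "V \<subseteq> isotyp U"
proof -
  have "V \<subseteq> \<Union>{V. invariant V \<and> rep_iso U V}" using assms by blast
  also have "\<dots> \<subseteq> isotyp U" unfolding isotypic_def using span_superset closure_subset by (rule subset_trans)
  finally show ?thesis .
qed

lemma invariant_isotyp: "invariant (isotyp U)"
proof -
  let ?Y = "\<Union>{V. invariant V \<and> rep_iso U V}"
  have "J x \<in> ?Y \<and> (\<forall>g\<in>carrier G. \<pi> g x \<in> ?Y)" if "x \<in> ?Y" for x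
  proof -
    obtain V where V: "invariant V" "rep_iso U V" "x \<in> V" using \<open>x \<in> ?Y\<close> by blast
    then have "J x \<in> V" "\<forall>g\<in>carrier G. \<pi> g x \<in> V" using invariantD(3,4)[OF V(1)] by blast+
    then show ?thesis using V(1,2) by blast
  qed
  then show ?thesis
    unfolding isotypic_def by (intro invariant_closure_span) (simp_all add: span_base)
qed

lemmas subspace_isotyp = invariantD(1)[OF invariant_isotyp]
  and closed_isotyp = invariantD(2)[OF invariant_isotyp]

lemma orth_proj_image_subset_isotyp:
  assumes D: "invariant D" and U: "irred U" and V: "invariant V" "rep_iso U V"
  shows "orth_proj D ` V \<subseteq> isotyp U"
proof -
  obtain T where T: "intertwines U T" "bij_betw T U V"
    using V(2) unfolding rep_iso_iff_intertwines_bij by blast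
  let ?L = "orth_proj D \<circ> T"
  have L: "intertwines U ?L" using D T(1) by (rule intertwines_orth_proj_comp)
  have "T ` U = V" using T(2) by (rule bij_betw_imp_surj_on)
  then have image: "orth_proj D ` V = ?L ` U" unfolding image_comp[symmetric] by simp
  from irred_intertwines_zero_or_inj[OF U L] show ?thesis
  proof
    assume "\<forall>u\<in>U. ?L u = 0"
    then have "orth_proj D ` V \<subseteq> {0}" unfolding image by auto
    moreover have "{0} \<subseteq> isotyp U" using subspace_0[OF subspace_isotyp] by simp
    ultimately show ?thesis by (rule subset_trans)
  next
    assume "inj_on ?L U"
    then have "bij_betw ?L U (?L ` U)" by (simp add: bij_betw_def)
    then have "rep_iso U (?L ` U)" using L unfolding rep_iso_iff_intertwines_bij by blast
    with invariant_intertwines_image[OF U L] show ?thesis unfolding image by (rule rep_iso_subset_isotyp)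
  qed
qed

lemma orth_proj_isotyp_subset:
  assumes "invariant D" "irred U"
  shows "orth_proj D ` isotyp U \<subseteq> isotyp U"
proof -
  let ?Y = "\<Union>{V. invariant V \<and> rep_iso U V}"
  note D = invariantD(1,2)[OF assms(1)]
  have "orth_proj D ` ?Y \<subseteq> isotyp U" using orth_proj_image_subset_isotyp[OF assms] by blast
  then have "span (orth_proj D ` ?Y) \<subseteq> isotyp U" using subspace_isotyp by (rule span_minimal)
  then have "orth_proj D ` span ?Y \<subseteq> isotyp U"
    by (simp add: linear_span_image[OF orth_proj_linear[OF D]])
  then have "orth_proj D ` closure (span ?Y) \<subseteq> isotyp U"
    using linear_continuous_on[OF orth_proj_bounded_linear[OF D]] closed_isotyp
    by (intro image_closure_subset)
  then show ?thesis unfolding isotypic_def .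
qed

lemma orth_proj_isotyp_commute:
  assumes "invariant D" "irred U"
  shows "orth_proj (isotyp U) (orth_proj D x) = orth_proj D (orth_proj (isotyp U) x)"
  using invariantD(1,2)[OF assms(1)] subspace_isotyp closed_isotyp orth_proj_isotyp_subset[OF assms]
  by (rule orth_proj_commute)

lemma orth_proj_isotyp_nonzero:
  assumes "irred U" "U \<subseteq> acl {x}"
  shows "orth_proj (isotyp U) x \<noteq> 0"
proof
  assume "orth_proj (isotyp U) x = 0"
  then have "x \<in> orthogonal_comp (isotyp U)"
    using orth_proj(2)[OF subspace_isotyp[of U] closed_isotyp[of U], where x = x]
    by (simp add: orthogonal_comp_def orthogonal_def inner_commute)
  then have "acl {x} \<subseteq> orthogonal_comp (isotyp U)"
    by (intro acl_minimal invariant_orthogonal_comp invariant_isotyp) simp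
  moreover have "U \<subseteq> isotyp U" using irredD(1)[OF assms(1)] rep_iso_refl by (rule rep_iso_subset_isotyp)
  ultimately have "U \<subseteq> {0}" using assms(2) orthogonal_Int_0[OF subspace_isotyp] by blast
  moreover have "0 \<in> U" using subspace_0[OF invariantD(1)[OF irredD(1)[OF assms(1)]]] .
  ultimately show False using irredD(2)[OF assms(1)] by blast
qed

lemma exists_isotyp_orth_proj_nonzero:
  assumes "x \<noteq> 0"
  obtains U where "irred U" "orth_proj (isotyp U) x \<noteq> 0"
proof -
  obtain S where S: "finite S" "acl {x} = span S" by (rule acl_finite_span[of "{x}"]) simp
  have "acl {x} \<noteq> {0}" using subset_acl[of "{x}"] assms by blast
  then obtain U where "irred U" "U \<subseteq> acl {x}"
    by (rule exists_irred_subset[OF invariant_acl _ _ S(1)]) (simp add: S(2))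
  then show ?thesis using that orth_proj_isotyp_nonzero by blast
qed

lemma orth_proj_eq_iff_isotyp:
  assumes "invariant D" "invariant E"
  shows "orth_proj D x = orth_proj E x \<longleftrightarrow>
    (\<forall>U. irred U \<longrightarrow> orth_proj D (orth_proj (isotyp U) x) = orth_proj E (orth_proj (isotyp U) x))"
proof -
  have Q: "linear (orth_proj (isotyp U))" for U
    using subspace_isotyp closed_isotyp by (rule orth_proj_linear)
  have diff: "orth_proj D (orth_proj (isotyp U) x) - orth_proj E (orth_proj (isotyp U) x)
      = orth_proj (isotyp U) (orth_proj D x - orth_proj E x)" if "irred U" for U
    by (simp add: orth_proj_isotyp_commute[OF assms(1) that] orth_proj_isotyp_commute[OF assms(2) that]
        linear_diff[OF Q])
  show ?thesis
  proof
    assume "orth_proj D x = orth_proj E x"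
    then show "\<forall>U. irred U \<longrightarrow> orth_proj D (orth_proj (isotyp U) x) = orth_proj E (orth_proj (isotyp U) x)"
      using diff linear_0[OF Q] by fastforce
  next
    assume "\<forall>U. irred U \<longrightarrow> orth_proj D (orth_proj (isotyp U) x) = orth_proj E (orth_proj (isotyp U) x)"
    then have "orth_proj (isotyp U) (orth_proj D x - orth_proj E x) = 0" if "irred U" for U
      using diff[OF that] that by simp
    then show "orth_proj D x = orth_proj E x"
      using exists_isotyp_orth_proj_nonzero[of "orth_proj D x - orth_proj E x"] by auto
  qed
qed

end

theorem mainTheorem15:
  fixes G :: "('g, 'b) monoid_scheme"
    and J :: "'a::{real_inner, complete_space} \<Rightarrow> 'a"
    and \<pi> :: "'g \<Rightarrow> 'a \<Rightarrow> 'a"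
    and a :: "nat \<Rightarrow> 'a" and n :: nat
    and B C :: "'a set"
  assumes "group G" and "finite (carrier G)"
    and "cplx_structure J"
    and "unitary_rep G J \<pi>"
    and "\<not> (\<exists>S. finite S \<and> span S = (UNIV :: 'a set))"
  shows "star_indep G J \<pi> a n B C \<longleftrightarrow>
    (\<forall>j\<in>{1..n}. orth_proj (acl_pi G J \<pi> (B \<union> C)) (a j) = orth_proj (acl_pi G J \<pi> C) (a j))"
proof -
  interpret finite_unitary_rep G J \<pi> by (rule finite_unitary_rep.intro[OF assms(1-4)])
  show ?thesis
    unfolding star_indep_def using orth_proj_eq_iff_isotyp[OF invariant_acl invariant_acl] by blast
qed

end
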